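(* Let $T$ be a sound arithmetical theory. Then $\mathrm{SA}_{L(T)} + T + \mathrm{IND}(\mathit{sk}^\omega(L(T))) \sqsubseteq_{L(T)} \mathrm{Tr}(L(T))$, i.e. every $L(T)$ sentence provable in $\mathrm{SA}_{L(T)} + T + \mathrm{IND}(\mathit{sk}^\omega(L(T)))$ is true in $\mathbb{N}$.
   Context: An arithmetical language contains $0/0$, $s/1$ and possibly symbols for primitive recursive functions, interpreted naturally in the structure $\mathbb{N}$; an arithmetical theory $T$ is sound if $\mathbb{N}\models T$. $\mathrm{Tr}(L(T))$ is the set of $L(T)$ sentences true in $\mathbb{N}$. $T_1\sqsubseteq_{L} T_2$ means $T_2$ proves every $L$ formula that $T_1$ proves. Skolem symbols $\mathfrak{s}_{Qx\varphi}$ (a new function symbol of arity $|\mathrm{FV}(Qx\varphi)|$ for each formula $Qx\varphi$, $Q\in\{\forall,\exists\}$), $\mathit{sk}^\omega(L)$ is the closure of $L$ under adding these symbols. $\mathrm{SA}_L$: universal closures of $\exists x\varphi(x,\vec y)\to\varphi(\mathfrak{s}_{\exists x\varphi}(\vec y),\vec y)$ and $\varphi(\mathfrak{s}_{\forall x\varphi}(\vec y),\vec y)\to\forall x\varphi(x,\vec y)$ for all $\mathit{sk}^\omega(L)$ formulas $\varphi$. $I_x\varphi=\forall\vec z(\varphi(0,\vec z)\wedge\forall x(\varphi(x,\vec z)\to\varphi(s(x),\vec z))\to\forall x\varphi(x,\vec z))$; $\mathrm{IND}(L')=\{I_x\varphi:\varphi$ an $L'$ formula$\}$. *)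

theory Defs
  imports Main
begin

inductive primrec_fn :: "nat \<Rightarrow> (nat list \<Rightarrow> nat) \<Rightarrow> bool" where
  pr_zero: "primrec_fn n (\<lambda>_. 0)"
| pr_succ: "primrec_fn 1 (\<lambda>xs. Suc (xs ! 0))"
| pr_proj: "i < n \<Longrightarrow> primrec_fn n (\<lambda>xs. xs ! i)"
| pr_comp: "primrec_fn m g \<Longrightarrow> length hs = m \<Longrightarrow> (\<forall>h\<in>set hs. primrec_fn n h)
            \<Longrightarrow> primrec_fn n (\<lambda>xs. g (map (\<lambda>h. h xs) hs))"
| pr_rec: "primrec_fn n g \<Longrightarrow> primrec_fn (n + 2) h
           \<Longrightarrow> primrec_fn (n + 1)
                (\<lambda>xs. rec_nat (g (tl xs)) (\<lambda>k r. h (k # r # tl xs)) (hd xs))"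
| pr_ext: "primrec_fn n f \<Longrightarrow> (\<forall>xs. length xs = n \<longrightarrow> f' xs = f xs) \<Longrightarrow> primrec_fn n f'"

text \<open>A symbol is either a primitive-recursive function symbol PR n f (arity n, natural
interpretation f) or a Skolem symbol Sk q x phi for the formula Q x phi, where q = True means
Q = forall and q = False means Q = exists.\<close>

datatype sym = PR nat "nat list \<Rightarrow> nat" | Sk bool nat fm
and trm = Var nat | App sym "trm list"
and fm = Fls | Eq trm trm | Imp fm fm | All nat fm

definition Neg :: "fm \<Rightarrow> fm" where "Neg p = Imp p Fls"
definition Ex :: "nat \<Rightarrow> fm \<Rightarrow> fm" where "Ex x p = Neg (All x (Neg p))"
definition And :: "fm \<Rightarrow> fm \<Rightarrow> fm" where "And p q = Neg (Imp p (Neg q))"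

fun fvt :: "trm \<Rightarrow> nat set" where
  "fvt (Var x) = {x}"
| "fvt (App f ts) = (\<Union>t\<in>set ts. fvt t)"

fun fv :: "fm \<Rightarrow> nat set" where
  "fv Fls = {}"
| "fv (Eq s t) = fvt s \<union> fvt t"
| "fv (Imp p q) = fv p \<union> fv q"
| "fv (All x p) = fv p - {x}"

fun appst :: "trm \<Rightarrow> (sym \<times> nat) set" where
  "appst (Var x) = {}"
| "appst (App f ts) = insert (f, length ts) (\<Union>t\<in>set ts. appst t)"

fun apps :: "fm \<Rightarrow> (sym \<times> nat) set" where
  "apps Fls = {}"
| "apps (Eq s t) = appst s \<union> appst t"
| "apps (Imp p q) = apps p \<union> apps q"
| "apps (All x p) = apps p"

fun arity :: "sym \<Rightarrow> nat" where
  "arity (PR n f) = n"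
| "arity (Sk q x p) = card (fv p - {x})"

definition wft :: "sym set \<Rightarrow> trm \<Rightarrow> bool" where
  "wft L t \<longleftrightarrow> (\<forall>(f, k)\<in>appst t. f \<in> L \<and> k = arity f)"

definition wff :: "sym set \<Rightarrow> fm \<Rightarrow> bool" where
  "wff L p \<longleftrightarrow> (\<forall>(f, k)\<in>apps p. f \<in> L \<and> k = arity f)"

definition sentence :: "sym set \<Rightarrow> fm \<Rightarrow> bool" where
  "sentence L p \<longleftrightarrow> wff L p \<and> fv p = {}"

definition zero_sym :: sym where "zero_sym = PR 0 (\<lambda>_. 0)"
definition succ_sym :: sym where "succ_sym = PR 1 (\<lambda>xs. Suc (xs ! 0))"

definition arith_lang :: "sym set \<Rightarrow> bool" where
  "arith_lang L \<longleftrightarrow> zero_sym \<in> L \<and> succ_sym \<in> L \<and>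
     (\<forall>f\<in>L. \<exists>n g. f = PR n g \<and> primrec_fn n g)"

inductive_set skw :: "sym set \<Rightarrow> sym set" for L :: "sym set" where
  base: "f \<in> L \<Longrightarrow> f \<in> skw L"
| sk: "\<forall>fk\<in>apps p. fst fk \<in> skw L \<and> snd fk = arity (fst fk) \<Longrightarrow> Sk q x p \<in> skw L"

fun substt :: "(nat \<Rightarrow> trm) \<Rightarrow> trm \<Rightarrow> trm" where
  "substt s (Var x) = s x"
| "substt s (App f ts) = App f (map (substt s) ts)"

fun ssubst :: "(nat \<Rightarrow> trm) \<Rightarrow> fm \<Rightarrow> fm" where
  "ssubst s Fls = Fls"
| "ssubst s (Eq a b) = Eq (substt s a) (substt s b)"
| "ssubst s (Imp p q) = Imp (ssubst s p) (ssubst s q)"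
| "ssubst s (All y p) =
     (let V = (\<Union>w\<in>fv p - {y}. fvt (s w));
          z = (if y \<in> V then Suc (Max (V \<union> fv p)) else y)
      in All z (ssubst (s(y := Var z)) p))"

definition subst :: "nat \<Rightarrow> trm \<Rightarrow> fm \<Rightarrow> fm" where
  "subst x t p = ssubst (Var(x := t)) p"

definition vars_list :: "nat set \<Rightarrow> nat list" where
  "vars_list V = sorted_list_of_set V"

definition close_vars :: "nat list \<Rightarrow> fm \<Rightarrow> fm" where
  "close_vars xs p = foldr All xs p"

definition univ_closure :: "fm \<Rightarrow> fm" where
  "univ_closure p = close_vars (vars_list (fv p)) p"

fun evalt :: "(sym \<Rightarrow> nat list \<Rightarrow> nat) \<Rightarrow> (nat \<Rightarrow> nat) \<Rightarrow> trm \<Rightarrow> nat" where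
  "evalt I e (Var x) = e x"
| "evalt I e (App f ts) = I f (map (evalt I e) ts)"

fun sat :: "(sym \<Rightarrow> nat list \<Rightarrow> nat) \<Rightarrow> (nat \<Rightarrow> nat) \<Rightarrow> fm \<Rightarrow> bool" where
  "sat I e Fls = False"
| "sat I e (Eq a b) = (evalt I e a = evalt I e b)"
| "sat I e (Imp p q) = (sat I e p \<longrightarrow> sat I e q)"
| "sat I e (All x p) = (\<forall>n. sat I (e(x := n)) p)"

text \<open>Natural interpretation of arithmetical symbols (Skolem symbols never occur in
L(T) formulas; they get a dummy value).\<close>
fun natI :: "sym \<Rightarrow> nat list \<Rightarrow> nat" where
  "natI (PR n f) = f"
| "natI (Sk q x p) = (\<lambda>_. 0)"

definition Tr :: "sym set \<Rightarrow> fm set" where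
  "Tr L = {p. sentence L p \<and> (\<forall>e. sat natI e p)}"

definition atomic :: "fm \<Rightarrow> bool" where
  "atomic p \<longleftrightarrow> p = Fls \<or> (\<exists>a b. p = Eq a b)"

inductive lax :: "sym set \<Rightarrow> fm \<Rightarrow> bool" for L :: "sym set" where
  ax_K: "wff L p \<Longrightarrow> wff L q \<Longrightarrow> lax L (Imp p (Imp q p))"
| ax_S: "wff L p \<Longrightarrow> wff L q \<Longrightarrow> wff L r \<Longrightarrow>
         lax L (Imp (Imp p (Imp q r)) (Imp (Imp p q) (Imp p r)))"
| ax_DN: "wff L p \<Longrightarrow> lax L (Imp (Neg (Neg p)) p)"
| ax_inst: "wff L p \<Longrightarrow> wft L t \<Longrightarrow> lax L (Imp (All x p) (subst x t p))"
| ax_dist: "wff L p \<Longrightarrow> wff L q \<Longrightarrow> lax L (Imp (All x (Imp p q)) (Imp (All x p) (All x q)))"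
| ax_vac: "wff L p \<Longrightarrow> x \<notin> fv p \<Longrightarrow> lax L (Imp p (All x p))"
| ax_refl: "lax L (Eq (Var x) (Var x))"
| ax_leib: "wff L p \<Longrightarrow> atomic p \<Longrightarrow> wft L a \<Longrightarrow> wft L b \<Longrightarrow>
            lax L (Imp (Eq a b) (Imp (subst x a p) (subst x b p)))"
| ax_gen: "lax L p \<Longrightarrow> lax L (All x p)"

inductive prv :: "sym set \<Rightarrow> fm set \<Rightarrow> fm \<Rightarrow> bool" for L :: "sym set" and G :: "fm set" where
  hyp: "p \<in> G \<Longrightarrow> prv L G p"
| logax: "lax L p \<Longrightarrow> prv L G p"
| mp: "prv L G (Imp p q) \<Longrightarrow> prv L G p \<Longrightarrow> prv L G q"

definition below :: "sym set \<Rightarrow> sym set \<times> fm set \<Rightarrow> sym set \<times> fm set \<Rightarrow> bool" where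
  "below L T1 T2 \<longleftrightarrow>
     (\<forall>p. wff L p \<longrightarrow> prv (fst T1) (snd T1) p \<longrightarrow> prv (fst T2) (snd T2) p)"

definition skargs :: "nat \<Rightarrow> fm \<Rightarrow> trm list" where
  "skargs x p = map Var (vars_list (fv p - {x}))"

definition SA :: "sym set \<Rightarrow> fm set" where
  "SA L = {univ_closure (Imp (Ex x p) (subst x (App (Sk False x p) (skargs x p)) p)) | x p.
             wff (skw L) p}
        \<union> {univ_closure (Imp (subst x (App (Sk True x p) (skargs x p)) p) (All x p)) | x p.
             wff (skw L) p}"

definition ind_ax :: "nat \<Rightarrow> fm \<Rightarrow> fm" where
  "ind_ax x p = close_vars (vars_list (fv p - {x}))
     (Imp (And (subst x (App zero_sym []) p)
               (All x (Imp p (subst x (App succ_sym [Var x]) p))))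
          (All x p))"

definition IND :: "sym set \<Rightarrow> fm set" where
  "IND L' = {ind_ax x p | x p. wff L' p}"

end

theory Submission
  imports Defs
begin

text \<open>Expand the standard model to all Skolem symbols by letting Sk q x p pick, by choice,
a witness of \<exists>x p (q = False) or a counterexample to \<forall>x p (q = True) for the given values of
the other free variables. In this expansion the Skolem axioms hold by the choice property,
every induction axiom holds because the domain is still \<nat> with the true zero and successor,
and T holds because the expansion agrees with \<nat> on L. By soundness of the calculus every
theorem of SA + T + IND is true in the expansion, so an L formula among them is true in \<nat>;
its universal closure then lies in Tr(L), and the formula follows from it by instantiation.\<close>

lemma finite_fvt: "finite (fvt t)"
  by (induction t rule: fvt.induct) auto

lemma finite_fv: "finite (fv p)"
  by (induction p rule: fv.induct) (auto simp: finite_fvt)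

lemma set_vars_list_fv: "set (vars_list (fv p - {x})) = fv p - {x}"
  unfolding vars_list_def by (simp add: finite_fv)

lemma fv_close_vars: "fv (close_vars xs p) = fv p - set xs"
  by (induction xs) (auto simp: close_vars_def)

lemma wff_close_vars: "wff L (close_vars xs p) = wff L p"
  by (induction xs) (auto simp: close_vars_def wff_def)

lemma evalt_cong_env: "\<forall>v\<in>fvt t. e v = e' v \<Longrightarrow> evalt I e t = evalt I e' t"
  by (induction t rule: fvt.induct) (auto cong: map_cong)

lemma sat_cong_env: "\<forall>v\<in>fv p. e v = e' v \<Longrightarrow> sat I e p = sat I e' p"
proof (induction p arbitrary: e e' rule: fv.induct)
  case (2 s t)
  then show ?case using evalt_cong_env[of s e e' I] evalt_cong_env[of t e e' I] by auto
next
  case (3 p q)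
  then have "sat I e p = sat I e' p" "sat I e q = sat I e' q" by auto
  then show ?case by simp
next
  case (4 x p)
  have "sat I (e(x := n)) p = sat I (e'(x := n)) p" for n using 4 by (intro "4.IH") auto
  then show ?case by simp
qed auto

lemma evalt_cong_interp: "\<forall>(f, k)\<in>appst t. I f = J f \<Longrightarrow> evalt I e t = evalt J e t"
  by (induction t rule: appst.induct) (auto cong: map_cong)

lemma sat_cong_interp: "\<forall>(f, k)\<in>apps p. I f = J f \<Longrightarrow> sat I e p = sat J e p"
  by (induction p arbitrary: e rule: apps.induct) (auto simp: evalt_cong_interp[of _ I J])

lemma evalt_substt: "evalt I e (substt s t) = evalt I (\<lambda>v. evalt I e (s v)) t"
  by (induction s t rule: substt.induct) (auto cong: map_cong)

lemma sat_ssubst: "sat I e (ssubst s p) = sat I (\<lambda>v. evalt I e (s v)) p"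
proof (induction s p arbitrary: e rule: ssubst.induct)
  case (4 s y p)
  define V where "V = (\<Union>w\<in>fv p - {y}. fvt (s w))"
  define z where "z = (if y \<in> V then Suc (Max (V \<union> fv p)) else y)"
  have "finite (V \<union> fv p)" unfolding V_def by (auto simp: finite_fv finite_fvt)
  then have "w \<le> Max (V \<union> fv p)" if "w \<in> V" for w using that by simp
  then have fresh: "z \<notin> V" unfolding z_def by (metis Suc_n_not_le_n)
  have renamed: "ssubst s (All y p) = All z (ssubst (s(y := Var z)) p)"
    by (simp add: V_def z_def Let_def)
  have "sat I (e(z := n)) (ssubst (s(y := Var z)) p) = sat I ((\<lambda>v. evalt I e (s v))(y := n)) p"
    for n
  proof -
    have "sat I (e(z := n)) (ssubst (s(y := Var z)) p)
        = sat I (\<lambda>v. evalt I (e(z := n)) ((s(y := Var z)) v)) p"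
      by (rule "4.IH") (auto simp: V_def z_def Let_def)
    also have "\<dots> = sat I ((\<lambda>v. evalt I e (s v))(y := n)) p"
    proof (rule sat_cong_env, intro ballI)
      fix v assume "v \<in> fv p"
      then show "evalt I (e(z := n)) ((s(y := Var z)) v) = ((\<lambda>v. evalt I e (s v))(y := n)) v"
        using fresh by (cases "v = y") (auto simp: V_def intro!: evalt_cong_env)
    qed
    finally show ?thesis .
  qed
  then show ?case by (simp only: renamed sat.simps)
qed (auto simp: evalt_substt)

lemma sat_subst: "sat I e (subst x t p) = sat I (e(x := evalt I e t)) p"
  unfolding subst_def sat_ssubst by (intro sat_cong_env) auto

lemma substt_Var: "substt Var t = t"
  by (induction t rule: fvt.induct) (auto simp: map_idI)

lemma ssubst_Var: "ssubst Var p = p"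
  by (induction p rule: fv.induct) (simp_all add: substt_Var Let_def)

lemma sat_close_vars: "(\<And>e. sat I e p) \<Longrightarrow> sat I e (close_vars xs p)"
  by (induction xs arbitrary: e) (auto simp: close_vars_def)

lemma univ_closure_in_Tr: "wff L p \<Longrightarrow> (\<And>e. sat natI e p) \<Longrightarrow> univ_closure p \<in> Tr L"
  by (simp add: Tr_def sentence_def univ_closure_def wff_close_vars fv_close_vars vars_list_def
      finite_fv sat_close_vars)

lemma lax_sound: "lax L p \<Longrightarrow> sat I e p"
proof (induction p arbitrary: e rule: lax.induct)
  case (ax_vac p x)
  have "sat I (e(x := n)) p = sat I e p" for n
    using ax_vac by (intro sat_cong_env) auto
  then show ?case by simp
qed (auto simp: Neg_def sat_subst)

lemma prv_sound: "prv L G p \<Longrightarrow> (\<And>q e. q \<in> G \<Longrightarrow> sat I e q) \<Longrightarrow> sat I e p"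
  by (induction p arbitrary: e rule: prv.induct) (auto intro: lax_sound)

lemma prv_close_vars_elim: "prv L G (close_vars xs p) \<Longrightarrow> wff L p \<Longrightarrow> prv L G p"
proof (induction xs)
  case (Cons x xs)
  have "wff L (close_vars xs p)" using Cons.prems(2) by (simp add: wff_close_vars)
  then have "lax L (Imp (All x (close_vars xs p)) (subst x (Var x) (close_vars xs p)))"
    by (rule ax_inst) (simp add: wft_def)
  moreover have "subst x (Var x) (close_vars xs p) = close_vars xs p"
    by (simp add: subst_def ssubst_Var)
  moreover have "prv L G (All x (close_vars xs p))"
    using Cons.prems(1) by (simp add: close_vars_def)
  ultimately have "prv L G (close_vars xs p)" by (metis logax mp)
  then show ?case using Cons.IH Cons.prems(2) by blast
qed (simp add: close_vars_def)

text \<open>The formula of a Skolem symbol may contain further Skolem symbols, so the choice functions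
are defined simultaneously with evaluation and satisfaction, by recursion on size.\<close>

definition args_env :: "nat list \<Rightarrow> nat list \<Rightarrow> nat \<Rightarrow> nat" where
  "args_env vs args v = (case map_of (zip vs args) v of Some a \<Rightarrow> a | None \<Rightarrow> 0)"

function skolem_choice :: "bool \<Rightarrow> nat \<Rightarrow> fm \<Rightarrow> nat list \<Rightarrow> nat"
  and evalt_sk :: "(nat \<Rightarrow> nat) \<Rightarrow> trm \<Rightarrow> nat"
  and sat_sk :: "(nat \<Rightarrow> nat) \<Rightarrow> fm \<Rightarrow> bool" where
  "skolem_choice q x p args =
     (let e = args_env (vars_list (fv p - {x})) args
      in if q then SOME n. \<not> sat_sk (e(x := n)) p else SOME n. sat_sk (e(x := n)) p)"
| "evalt_sk e (Var v) = e v"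
| "evalt_sk e (App (PR n g) ts) = g (map (evalt_sk e) ts)"
| "evalt_sk e (App (Sk q x p) ts) = skolem_choice q x p (map (evalt_sk e) ts)"
| "sat_sk e Fls = False"
| "sat_sk e (Eq a b) = (evalt_sk e a = evalt_sk e b)"
| "sat_sk e (Imp p q) = (sat_sk e p \<longrightarrow> sat_sk e q)"
| "sat_sk e (All x p) = (\<forall>n. sat_sk (e(x := n)) p)"
  by pat_completeness auto
termination
  by (relation "measure (case_sum (\<lambda>(q, x, p, args). size p + 1)
                   (case_sum (\<lambda>(e, t). size t) (\<lambda>(e, p). size p)))")
     (auto dest: size_list_estimation'[where f = size, OF _ order.refl])

definition skolemI :: "sym \<Rightarrow> nat list \<Rightarrow> nat" where
  "skolemI f = (case f of PR n g \<Rightarrow> g | Sk q x p \<Rightarrow> skolem_choice q x p)"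

lemma evalt_sk_eq_evalt: "evalt_sk e t = evalt skolemI e t"
  by (induction t rule: fvt.induct) (auto simp: skolemI_def split: sym.splits cong: map_cong)

lemma sat_sk_eq_sat: "sat_sk e p = sat skolemI e p"
  by (induction p arbitrary: e rule: fv.induct) (auto simp: evalt_sk_eq_evalt)

lemma skolemI_Sk_vars: "skolemI (Sk q x p) (map e (vars_list (fv p - {x})))
    = (if q then SOME n. \<not> sat skolemI (e(x := n)) p else SOME n. sat skolemI (e(x := n)) p)"
proof -
  let ?vs = "vars_list (fv p - {x})"
  have "sat skolemI ((args_env ?vs (map e ?vs))(x := n)) p = sat skolemI (e(x := n)) p" for n
    by (intro sat_cong_env) (auto simp: args_env_def map_of_zip_map set_vars_list_fv)
  then show ?thesis by (simp add: skolemI_def sat_sk_eq_sat Let_def)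
qed

lemma sat_skolemI_subst_Sk:
  "sat skolemI e (subst x (App (Sk q x p) (skargs x p)) p)
     = sat skolemI (e(x := if q then SOME n. \<not> sat skolemI (e(x := n)) p
                     else SOME n. sat skolemI (e(x := n)) p)) p"
  by (simp add: sat_subst skargs_def comp_def skolemI_Sk_vars[unfolded comp_def])

lemma SA_valid_skolemI: "q \<in> SA L \<Longrightarrow> sat skolemI e q"
  unfolding SA_def
proof (elim UnE CollectE exE conjE)
  fix x p
  assume q: "q = univ_closure (Imp (Ex x p) (subst x (App (Sk False x p) (skargs x p)) p))"
  have "sat skolemI e' (Imp (Ex x p) (subst x (App (Sk False x p) (skargs x p)) p))" for e'
    unfolding Ex_def Neg_def sat.simps sat_skolemI_subst_Sk if_False
    using someI[of "\<lambda>n. sat skolemI (e'(x := n)) p"] by blast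
  then show "sat skolemI e q" unfolding q univ_closure_def by (rule sat_close_vars)
next
  fix x p
  assume q: "q = univ_closure (Imp (subst x (App (Sk True x p) (skargs x p)) p) (All x p))"
  have "sat skolemI e' (Imp (subst x (App (Sk True x p) (skargs x p)) p) (All x p))" for e'
    unfolding sat.simps sat_skolemI_subst_Sk if_True
    using someI[of "\<lambda>n. \<not> sat skolemI (e'(x := n)) p"] by blast
  then show "sat skolemI e q" unfolding q univ_closure_def by (rule sat_close_vars)
qed

lemma IND_valid:
  assumes "q \<in> IND L'" and "I zero_sym [] = 0" and "\<And>n. I succ_sym [n] = Suc n"
  shows "sat I e q"
  using assms(1) unfolding IND_def
proof (elim CollectE exE conjE)
  fix x p assume q: "q = ind_ax x p"
  have "sat I e' (Imp (And (subst x (App zero_sym []) p)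
                   (All x (Imp p (subst x (App succ_sym [Var x]) p))))
             (All x p))" for e'
  proof -
    have induct: "sat I (e'(x := 0)) p
        \<Longrightarrow> \<forall>n. sat I (e'(x := n)) p \<longrightarrow> sat I (e'(x := Suc n)) p
        \<Longrightarrow> sat I (e'(x := n)) p" for n
      by (induction n) auto
    have zero: "evalt I e' (App zero_sym []) = 0" using assms(2) by simp
    have succ: "evalt I (e'(x := n)) (App succ_sym [Var x]) = Suc n" for n using assms(3) by simp
    show ?thesis
      unfolding And_def Neg_def sat.simps sat_subst zero succ fun_upd_upd using induct by blast
  qed
  then show "sat I e q" unfolding q ind_ax_def by (rule sat_close_vars)
qed

lemma sat_skolemI_iff_natI: "arith_lang L \<Longrightarrow> wff L p \<Longrightarrow> sat skolemI e p = sat natI e p"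
proof (rule sat_cong_interp, clarify)
  fix f k assume "arith_lang L" "wff L p" "(f, k) \<in> apps p"
  then have "f \<in> L" by (auto simp: wff_def)
  then obtain n g where "f = PR n g" using \<open>arith_lang L\<close> by (auto simp: arith_lang_def)
  then show "skolemI f = natI f" by (simp add: skolemI_def)
qed

theorem proposition7:
  fixes L :: "sym set" and T :: "fm set"
  assumes "arith_lang L"
    and "\<forall>p\<in>T. sentence L p"
    and "\<forall>p\<in>T. \<forall>e. sat natI e p"
  shows "below L (skw L, SA L \<union> T \<union> IND (skw L)) (L, Tr L)"
  unfolding below_def fst_conv snd_conv
proof (intro allI impI)
  fix p assume wff_p: "wff L p" and prv_p: "prv (skw L) (SA L \<union> T \<union> IND (skw L)) p"
  have T_valid: "sat skolemI e q" if "q \<in> T" for q e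
    using that assms sat_skolemI_iff_natI by (auto simp: sentence_def)
  have IND_valid_skolemI: "sat skolemI e q" if "q \<in> IND (skw L)" for q e
    using that by (rule IND_valid) (simp_all add: skolemI_def zero_sym_def succ_sym_def)
  have "sat skolemI e p" for e
    using prv_sound[OF prv_p] SA_valid_skolemI T_valid IND_valid_skolemI by blast
  then have "sat natI e p" for e using sat_skolemI_iff_natI[OF assms(1) wff_p] by simp
  then have "univ_closure p \<in> Tr L" using wff_p by (intro univ_closure_in_Tr)
  then have "prv L (Tr L) (univ_closure p)" by (rule hyp)
  then show "prv L (Tr L) p" unfolding univ_closure_def using wff_p by (rule prv_close_vars_elim)
qed

end
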